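(* Let $\rho\in(0,1)$, $\phi:(0,1)\to\mathbb{R}_+$, $\alpha\geqslant0$, and let $\{\psi_t\}_{t\geqslant0}$ be a preconditioned first-order method satisfying $(\rho,\phi(\rho),\alpha)$-linear convergence. Then for any $x_0\in\mathbb{R}^d$, $m\geqslant1$ and $S\in\mathbb{R}^{m\times n}$ such that $\|C_S-I_d\|_2\leqslant\sqrt\rho$, the iterates $x_{t+1}=\psi_t(x_0,\dots,x_t;H_S)$ satisfy, for all $t\geqslant0$, $$\widetilde\delta_t\leqslant c(\alpha,\rho)\,\phi(\rho)^t\,\widetilde\delta_0,$$ where $\widetilde\delta_t=\frac12\nabla f(x_t)^\top H_S^{-1}\nabla f(x_t)$ and $c(\alpha,\rho)=\frac{1+\sqrt\rho}{1-\sqrt\rho}\,\alpha$.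
   Context: Let $A\in\mathbb{R}^{n\times d}$ with $n\geqslant d$, $b\in\mathbb{R}^d$, $\Lambda\in\mathbb{R}^{d\times d}$ diagonal with $\Lambda\succeq I_d$, and $\nu>0$. Set $H=A^\top A+\nu^2\Lambda$, $f(x)=\frac12 x^\top Hx-b^\top x$, $x^*=H^{-1}b$. For $S\in\mathbb{R}^{m\times n}$ set $H_S=A^\top S^\top SA+\nu^2\Lambda$ and $C_S=H^{-1/2}H_SH^{-1/2}$. For an iterate $x_t$, $\delta_t=\frac12\|x_t-x^*\|_H^2$ with $\|z\|_H^2=z^\top Hz$. A preconditioned first-order method is a sequence of functions $\{\psi_t\}_{t\geqslant0}$ such that for any preconditioner $P\succ0$ and any $x_0\in\mathbb{R}^d$ the iterates $x_{t+1}=\psi_t(x_0,\dots,x_t;P)$ satisfy $x_{t+1}\in x_0+P^{-1}\,\mathrm{span}\{\nabla f(x_0),\dots,\nabla f(x_t)\}$ for all $t\geqslant0$. It satisfies $(\rho,\phi(\rho),\alpha)$-linear convergence if for every $x_0\in\mathbb{R}^d$, $m\geqslant1$ and $S\in\mathbb{R}^{m\times n}$ with $\|C_S-I_d\|_2\leqslant\max\{\sqrt\rho,\rho\}$, the iterates $x_{t+1}=\psi_t(x_0,\dots,x_t;H_S)$ satisfy $\delta_t\leqslant\alpha\,\phi(\rho)^t\,\delta_0$ for all $t\geqslant0$. *)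

theory Defs
  imports "HOL-Analysis.Analysis"
begin

text \<open>Matrices: A is n x d as real^'d^'n (rows indexed by 'n). Square d x d matrices are real^'d^'d.\<close>

definition psd_mat :: "real^'d^'d \<Rightarrow> bool" where
  "psd_mat M \<longleftrightarrow> transpose M = M \<and> (\<forall>x. 0 \<le> x \<bullet> (M *v x))"

definition pd_mat :: "real^'d^'d \<Rightarrow> bool" where
  "pd_mat M \<longleftrightarrow> transpose M = M \<and> (\<forall>x. x \<noteq> 0 \<longrightarrow> 0 < x \<bullet> (M *v x))"

definition diag_mat :: "real^'d^'d \<Rightarrow> bool" where
  "diag_mat M \<longleftrightarrow> (\<forall>i j. i \<noteq> j \<longrightarrow> M $ i $ j = 0)"

definition inv_sqrt_mat :: "real^'d^'d \<Rightarrow> real^'d^'d" where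
  "inv_sqrt_mat H = (THE M. psd_mat M \<and> M ** M = matrix_inv H)"

definition Hmat :: "real^'d^'n \<Rightarrow> real^'d^'d \<Rightarrow> real \<Rightarrow> real^'d^'d" where
  "Hmat A Lam nu = transpose A ** A + (nu^2) *\<^sub>R Lam"

text \<open>A sketch S in R^(m x n) is given by m and its rows S 0, ..., S (m-1) in R^n.
  sgram m S is S^T S.\<close>
definition sgram :: "nat \<Rightarrow> (nat \<Rightarrow> real^'n) \<Rightarrow> real^'n^'n" where
  "sgram m S = (\<chi> i j. \<Sum>k<m. S k $ i * S k $ j)"

definition HSmat :: "real^'d^'n \<Rightarrow> real^'d^'d \<Rightarrow> real \<Rightarrow> nat \<Rightarrow> (nat \<Rightarrow> real^'n) \<Rightarrow> real^'d^'d" where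
  "HSmat A Lam nu m S = transpose A ** sgram m S ** A + (nu^2) *\<^sub>R Lam"

definition CSmat :: "real^'d^'n \<Rightarrow> real^'d^'d \<Rightarrow> real \<Rightarrow> nat \<Rightarrow> (nat \<Rightarrow> real^'n) \<Rightarrow> real^'d^'d" where
  "CSmat A Lam nu m S =
     inv_sqrt_mat (Hmat A Lam nu) ** HSmat A Lam nu m S ** inv_sqrt_mat (Hmat A Lam nu)"

definition spec_norm :: "real^'d^'d \<Rightarrow> real" where
  "spec_norm M = onorm (\<lambda>x. M *v x)"

definition fobj :: "real^'d^'n \<Rightarrow> real^'d^'d \<Rightarrow> real \<Rightarrow> real^'d \<Rightarrow> real^'d \<Rightarrow> real" where
  "fobj A Lam nu b x = (1/2) * (x \<bullet> (Hmat A Lam nu *v x)) - b \<bullet> x"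

text \<open>Gradient of f (f is quadratic with symmetric H): grad f(x) = H x - b.\<close>
definition gradf :: "real^'d^'n \<Rightarrow> real^'d^'d \<Rightarrow> real \<Rightarrow> real^'d \<Rightarrow> real^'d \<Rightarrow> real^'d" where
  "gradf A Lam nu b x = Hmat A Lam nu *v x - b"

definition xstar :: "real^'d^'n \<Rightarrow> real^'d^'d \<Rightarrow> real \<Rightarrow> real^'d \<Rightarrow> real^'d" where
  "xstar A Lam nu b = matrix_inv (Hmat A Lam nu) *v b"

definition delta :: "real^'d^'n \<Rightarrow> real^'d^'d \<Rightarrow> real \<Rightarrow> real^'d \<Rightarrow> real^'d \<Rightarrow> real" where
  "delta A Lam nu b x =
     (1/2) * ((x - xstar A Lam nu b) \<bullet> (Hmat A Lam nu *v (x - xstar A Lam nu b)))"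

definition delta_tilde :: "real^'d^'n \<Rightarrow> real^'d^'d \<Rightarrow> real \<Rightarrow> real^'d \<Rightarrow> nat \<Rightarrow> (nat \<Rightarrow> real^'n) \<Rightarrow> real^'d \<Rightarrow> real" where
  "delta_tilde A Lam nu b m S x =
     (1/2) * (gradf A Lam nu b x \<bullet> (matrix_inv (HSmat A Lam nu m S) *v gradf A Lam nu b x))"

text \<open>A method is psi :: nat => (iterate history list) => preconditioner => next iterate.
  hist psi P x0 t = [x_0, ..., x_t], with x_(t+1) = psi t [x_0,...,x_t] P.\<close>
fun hist :: "(nat \<Rightarrow> 'v list \<Rightarrow> 'p \<Rightarrow> 'v) \<Rightarrow> 'p \<Rightarrow> 'v \<Rightarrow> nat \<Rightarrow> 'v list" where
  "hist psi P x0 0 = [x0]"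
| "hist psi P x0 (Suc t) = hist psi P x0 t @ [psi t (hist psi P x0 t) P]"

definition iter :: "(nat \<Rightarrow> 'v list \<Rightarrow> 'p \<Rightarrow> 'v) \<Rightarrow> 'p \<Rightarrow> 'v \<Rightarrow> nat \<Rightarrow> 'v" where
  "iter psi P x0 t = hist psi P x0 t ! t"

definition precond_first_order ::
  "real^'d^'n \<Rightarrow> real^'d^'d \<Rightarrow> real \<Rightarrow> real^'d \<Rightarrow>
   (nat \<Rightarrow> (real^'d) list \<Rightarrow> real^'d^'d \<Rightarrow> real^'d) \<Rightarrow> bool" where
  "precond_first_order A Lam nu b psi \<longleftrightarrow>
     (\<forall>P x0 t. pd_mat P \<longrightarrow>
        iter psi P x0 (Suc t) - x0 \<in>
          (\<lambda>v. matrix_inv P *v v) ` span {gradf A Lam nu b (iter psi P x0 k) | k. k \<le> t})"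

definition linear_conv ::
  "real^'d^'n \<Rightarrow> real^'d^'d \<Rightarrow> real \<Rightarrow> real^'d \<Rightarrow>
   (nat \<Rightarrow> (real^'d) list \<Rightarrow> real^'d^'d \<Rightarrow> real^'d) \<Rightarrow> real \<Rightarrow> real \<Rightarrow> real \<Rightarrow> bool" where
  "linear_conv A Lam nu b psi rho phirho alpha \<longleftrightarrow>
     (\<forall>x0 m S. m \<ge> 1 \<longrightarrow>
        spec_norm (CSmat A Lam nu m S - mat 1) \<le> max (sqrt rho) rho \<longrightarrow>
        (\<forall>t. delta A Lam nu b (iter psi (HSmat A Lam nu m S) x0 t)
              \<le> alpha * phirho ^ t * delta A Lam nu b x0))"

end

theory Submission
  imports Defs
begin

text \<open>Write \<open>g = H (x - x\<^sup>*)\<close> for the gradient, so that \<open>\<delta> = g\<^sup>T H\<^sup>-\<^sup>1 g / 2\<close> and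
  \<open>\<delta>\<^sup>~ = g\<^sup>T H\<^sub>S\<^sup>-\<^sup>1 g / 2\<close>. Since \<open>C\<^sub>S\<close> is congruent to \<open>H\<^sub>S\<close> via \<open>H\<^sup>-\<^sup>1\<^sup>/\<^sup>2\<close>, the bound
  \<open>\<parallel>C\<^sub>S - I\<parallel> \<le> \<surd>\<rho>\<close> gives \<open>(1 - \<surd>\<rho>) H \<preceq> H\<^sub>S \<preceq> (1 + \<surd>\<rho>) H\<close>, and inverting,
  \<open>H\<^sup>-\<^sup>1 / (1 + \<surd>\<rho>) \<preceq> H\<^sub>S\<^sup>-\<^sup>1 \<preceq> H\<^sup>-\<^sup>1 / (1 - \<surd>\<rho>)\<close>. Hence
  \<open>\<delta>\<^sup>~\<^sub>t \<le> \<delta>\<^sub>t / (1 - \<surd>\<rho>) \<le> \<alpha> \<phi>\<^sup>t \<delta>\<^sub>0 / (1 - \<surd>\<rho>) \<le> \<alpha> \<phi>\<^sup>t \<delta>\<^sup>~\<^sub>0 (1 + \<surd>\<rho>) / (1 - \<surd>\<rho>)\<close>.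
  The only substantial ingredient is that \<open>H\<^sup>-\<^sup>1\<^sup>/\<^sup>2\<close> is well defined, i.e. that a positive
  definite matrix has a unique positive semidefinite square root; this rests on the
  spectral theorem, which follows by maximising the Rayleigh quotient on invariant subspaces.\<close>

section \<open>Symmetric and positive definite matrices\<close>

lemma inner_symmetric_matrix:
  fixes A :: "real^'n^'n"
  assumes "transpose A = A"
  shows "x \<bullet> (A *v y) = (A *v x) \<bullet> y"
  by (metis assms dot_lmul_matrix transpose_matrix_vector)

lemma symmetric_matrix_if_inner:
  fixes A :: "real^'n^'n"
  assumes "\<And>x y. x \<bullet> (A *v y) = (A *v x) \<bullet> y"
  shows "transpose A = A"
proof -
  have "(transpose A *v x - A *v x) \<bullet> y = 0" for x y
    using assms[of x y] by (simp add: dot_lmul_matrix inner_diff_left)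
  then have "transpose A *v x = A *v x" for x
    by (metis inner_eq_zero_iff right_minus_eq)
  then show ?thesis by (simp add: matrix_eq)
qed

lemma
  fixes A :: "'a::semiring_1^'n^'m"
  assumes "invertible A"
  shows matrix_inv_right: "A ** matrix_inv A = mat 1"
    and matrix_inv_left: "matrix_inv A ** A = mat 1"
proof -
  have "\<exists>A'. A ** A' = mat 1 \<and> A' ** A = mat 1"
    using assms unfolding invertible_def by blast
  then have "A ** matrix_inv A = mat 1 \<and> matrix_inv A ** A = mat 1"
    unfolding matrix_inv_def by (rule someI_ex)
  then show "A ** matrix_inv A = mat 1" "matrix_inv A ** A = mat 1" by auto
qed

lemma
  fixes A :: "'a::comm_semiring_1^'n^'n"
  assumes "invertible A"
  shows matrix_vector_inv_right: "A *v (matrix_inv A *v x) = x"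
    and matrix_vector_inv_left: "matrix_inv A *v (A *v x) = x"
  by (simp_all add: matrix_vector_mul_assoc matrix_inv_right[OF assms] matrix_inv_left[OF assms])

lemma pd_mat_invertible:
  assumes "pd_mat A"
  shows "invertible A"
proof -
  have "A *v x = 0 \<Longrightarrow> x = 0" for x
    using assms unfolding pd_mat_def by (metis inner_zero_right less_irrefl)
  then show ?thesis
    using invertible_left_inverse matrix_left_invertible_ker by blast
qed

lemma pd_mat_matrix_inv:
  assumes "pd_mat H"
  shows "pd_mat (matrix_inv H)"
proof -
  have symH: "transpose H = H" and posH: "\<And>x. x \<noteq> 0 \<Longrightarrow> 0 < x \<bullet> (H *v x)"
    using assms unfolding pd_mat_def by auto
  note inv = matrix_vector_inv_right[OF pd_mat_invertible[OF assms]]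
  have "x \<bullet> (matrix_inv H *v y) = (matrix_inv H *v x) \<bullet> y" for x y
    using inner_symmetric_matrix[OF symH, of "matrix_inv H *v x" "matrix_inv H *v y"]
    by (simp add: inv)
  moreover have "0 < x \<bullet> (matrix_inv H *v x)" if "x \<noteq> 0" for x
    using posH[of "matrix_inv H *v x"] that inv[of x]
    by (metis inner_commute matrix_vector_mult_0_right)
  ultimately show ?thesis
    unfolding pd_mat_def by (auto intro: symmetric_matrix_if_inner)
qed

lemma psd_mat_diff_mat_1_imp_pd_mat:
  assumes "psd_mat (L - mat 1)"
  shows "pd_mat L"
proof -
  have "x \<bullet> (L *v y) = (L *v x) \<bullet> y" for x y
    using assms inner_symmetric_matrix[of "L - mat 1" x y] unfolding psd_mat_def
    by (simp add: matrix_vector_mult_diff_rdistrib inner_diff_left inner_diff_right)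
  moreover have "0 < x \<bullet> (L *v x)" if "x \<noteq> 0" for x
    using assms that unfolding psd_mat_def
    by (smt (verit) inner_diff_right inner_gt_zero_iff matrix_vector_mult_diff_rdistrib
        matrix_vector_mul_lid)
  ultimately show ?thesis
    unfolding pd_mat_def by (auto intro: symmetric_matrix_if_inner)
qed

section \<open>The spectral theorem and square roots\<close>

lemma quadratic_nonneg_imp_linear_coeff_eq_0:
  fixes a b :: real
  assumes "\<And>t. 0 \<le> t * a + t\<^sup>2 * b"
  shows "a = 0"
proof -
  define c where "c = \<bar>b\<bar> + 1"
  have c: "c > 0" "b - c \<le> -1" unfolding c_def by auto
  have "0 \<le> c\<^sup>2 * ((- a / c) * a + (- a / c)\<^sup>2 * b)"
    by (rule mult_nonneg_nonneg[OF zero_le_power2 assms])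
  also have "\<dots> = a\<^sup>2 * (b - c)"
    using c by (simp add: field_simps power2_eq_square)
  also have "\<dots> \<le> - a\<^sup>2"
    using mult_left_mono[OF c(2), of "a\<^sup>2"] by simp
  finally show ?thesis by simp
qed

lemma rayleigh_maximizer_is_eigenvector:
  fixes K :: "real^'n^'n"
  assumes symK: "transpose K = K" and U: "subspace U" and invU: "\<And>u. u \<in> U \<Longrightarrow> K *v u \<in> U"
    and vU: "v \<in> U" and vv: "v \<bullet> v = 1"
    and maximal: "\<And>u. u \<in> U \<Longrightarrow> u \<bullet> (K *v u) \<le> (v \<bullet> (K *v v)) * (u \<bullet> u)"
  shows "K *v v = (v \<bullet> (K *v v)) *\<^sub>R v"
proof -
  define l where "l = v \<bullet> (K *v v)"
  define r where "r = l *\<^sub>R v - K *v v"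
  have rU: "r \<in> U"
    unfolding r_def using U vU invU by (simp add: subspace_diff subspace_scale)
  have Krv: "r \<bullet> (K *v v) = v \<bullet> (K *v r)"
    using inner_symmetric_matrix[OF symK, of v r] by (simp add: inner_commute)
  have "r \<bullet> r = (l *\<^sub>R v - K *v v) \<bullet> r"
    by (simp only: r_def)
  also have "\<dots> = l * (v \<bullet> r) - v \<bullet> (K *v r)"
    by (simp add: inner_diff_left inner_commute[of "K *v v" r] Krv)
  finally have rr: "r \<bullet> r = l * (v \<bullet> r) - v \<bullet> (K *v r)" .
  \<comment> \<open>maximality along the line \<open>v + t r\<close> makes this quadratic in \<open>t\<close> nonnegative, so its
    linear coefficient vanishes\<close>
  have "0 \<le> t * (2 * (r \<bullet> r)) + t\<^sup>2 * (l * (r \<bullet> r) - r \<bullet> (K *v r))" for t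
  proof -
    have "v + t *\<^sub>R r \<in> U"
      using U vU rU by (simp add: subspace_add subspace_scale)
    then have "0 \<le> l * ((v + t *\<^sub>R r) \<bullet> (v + t *\<^sub>R r)) - (v + t *\<^sub>R r) \<bullet> (K *v (v + t *\<^sub>R r))"
      using maximal unfolding l_def by fastforce
    also have "\<dots> = t * (2 * (l * (v \<bullet> r) - v \<bullet> (K *v r))) + t\<^sup>2 * (l * (r \<bullet> r) - r \<bullet> (K *v r))"
      using vv Krv unfolding l_def
      by (simp add: inner_add_left inner_add_right matrix_vector_right_distrib
          matrix_vector_mult_scaleR inner_commute power2_eq_square algebra_simps)
    finally show ?thesis unfolding rr[symmetric] .
  qed
  then have "2 * (r \<bullet> r) = 0"
    by (rule quadratic_nonneg_imp_linear_coeff_eq_0)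
  then show ?thesis
    unfolding r_def l_def by simp
qed

lemma symmetric_matrix_eigenvector_in_invariant_subspace:
  fixes K :: "real^'n^'n"
  assumes symK: "transpose K = K" and U: "subspace U" and invU: "\<And>u. u \<in> U \<Longrightarrow> K *v u \<in> U"
    and "U \<noteq> {0}"
  obtains v where "v \<in> U" "norm v = 1" "K *v v = (v \<bullet> (K *v v)) *\<^sub>R v"
proof -
  define T where "T = U \<inter> sphere 0 1"
  have normalize: "(1 / norm u) *\<^sub>R u \<in> T" if "u \<in> U" "u \<noteq> 0" for u
    unfolding T_def using U that by (simp add: subspace_scale)
  obtain u0 where "u0 \<in> U" "u0 \<noteq> 0"
    using \<open>U \<noteq> {0}\<close> U subspace_0 by blast
  then have "T \<noteq> {}"
    using normalize by blast
  moreover have "compact T"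
    unfolding T_def by (intro closed_Int_compact closed_subspace U compact_sphere)
  moreover have "continuous_on T (\<lambda>x. x \<bullet> (K *v x))"
    by (intro continuous_intros linear_continuous_on matrix_vector_mul_bounded_linear)
  ultimately obtain v where vT: "v \<in> T" and vmax: "\<And>y. y \<in> T \<Longrightarrow> y \<bullet> (K *v y) \<le> v \<bullet> (K *v v)"
    using continuous_attains_sup by metis
  have vU: "v \<in> U" and vn: "norm v = 1"
    using vT unfolding T_def by auto
  have "u \<bullet> (K *v u) \<le> (v \<bullet> (K *v v)) * (u \<bullet> u)" if "u \<in> U" for u
  proof (cases "u = 0")
    case False
    have "(u \<bullet> (K *v u)) / (norm u)\<^sup>2 \<le> v \<bullet> (K *v v)"
      using vmax[OF normalize[OF that False]]
      by (simp add: matrix_vector_mult_scaleR power2_eq_square)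
    then show ?thesis
      using False by (simp add: divide_le_eq power2_norm_eq_inner mult.commute)
  qed simp
  then have "K *v v = (v \<bullet> (K *v v)) *\<^sub>R v"
    using rayleigh_maximizer_is_eigenvector[OF symK U invU vU] vn by (simp add: norm_eq_1)
  then show ?thesis
    using that vU vn by blast
qed

definition orthonormal :: "'a::real_inner set \<Rightarrow> bool" where
  "orthonormal B \<longleftrightarrow> pairwise orthogonal B \<and> (\<forall>b\<in>B. norm b = 1)"

lemma symmetric_matrix_orthonormal_eigenbasis_of_invariant_subspace:
  fixes K :: "real^'n^'n"
  assumes symK: "transpose K = K"
  shows "subspace U \<Longrightarrow> (\<And>u. u \<in> U \<Longrightarrow> K *v u \<in> U) \<Longrightarrow>
    \<exists>B. orthonormal B \<and> span B = U \<and> (\<forall>b\<in>B. K *v b = (b \<bullet> (K *v b)) *\<^sub>R b)"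
proof (induction "dim U" arbitrary: U rule: less_induct)
  case less
  show ?case
  proof (cases "U = {0}")
    case True
    then show ?thesis
      by (intro exI[of _ "{}"]) (auto simp: orthonormal_def)
  next
    case False
    obtain v where vU: "v \<in> U" and vn: "norm v = 1" and Kv: "K *v v = (v \<bullet> (K *v v)) *\<^sub>R v"
      using symmetric_matrix_eigenvector_in_invariant_subspace[OF symK less.prems False] by blast
    have vv: "v \<bullet> v = 1"
      using vn by (simp add: norm_eq_1)
    define U' where "U' = {u \<in> U. v \<bullet> u = 0}"
    have U': "subspace U'"
      unfolding U'_def using less.prems(1) by (auto simp: subspace_def inner_add_right)
    have invU': "K *v u \<in> U'" if "u \<in> U'" for u
    proof -
      have "v \<bullet> (K *v u) = (K *v v) \<bullet> u"
        by (rule inner_symmetric_matrix[OF symK])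
      also have "\<dots> = (v \<bullet> (K *v v)) * (v \<bullet> u)"
        by (subst Kv) simp
      finally show ?thesis
        using that Kv less.prems(2) unfolding U'_def by auto
    qed
    have "U' \<subset> U"
      using vU vv unfolding U'_def by force
    then have "dim U' < dim U"
      using dim_psubset U' less.prems(1) span_eq_iff by metis
    then obtain B where B: "orthonormal B" "span B = U'" "\<forall>b\<in>B. K *v b = (b \<bullet> (K *v b)) *\<^sub>R b"
      using less.hyps U' invU' by blast
    have "B \<subseteq> U'"
      using B(2) span_superset by blast
    have "orthonormal (insert v B)"
      using B(1) \<open>B \<subseteq> U'\<close> vn unfolding orthonormal_def U'_def pairwise_insert
      by (auto simp: orthogonal_def inner_commute)
    moreover have "span (insert v B) = U"
    proof
      show "span (insert v B) \<subseteq> U"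
        using \<open>B \<subseteq> U'\<close> vU less.prems(1) unfolding U'_def by (intro span_minimal) auto
      show "U \<subseteq> span (insert v B)"
      proof
        fix u assume "u \<in> U"
        then have "u - (v \<bullet> u) *\<^sub>R v \<in> span B"
          unfolding B(2) U'_def using vU vv less.prems(1)
          by (simp add: subspace_diff subspace_scale inner_diff_right)
        then show "u \<in> span (insert v B)"
          using span_breakdown_eq by blast
      qed
    qed
    ultimately show ?thesis
      using B(3) Kv by blast
  qed
qed

corollary pd_mat_orthonormal_eigenbasis:
  fixes K :: "real^'n^'n"
  assumes "pd_mat K"
  obtains B lam where "orthonormal B" "span B = UNIV"
    and "\<And>b. b \<in> B \<Longrightarrow> K *v b = lam b *\<^sub>R b" and "\<And>b. b \<in> B \<Longrightarrow> lam b > 0"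
proof -
  have symK: "transpose K = K" and posK: "\<And>x. x \<noteq> 0 \<Longrightarrow> 0 < x \<bullet> (K *v x)"
    using assms unfolding pd_mat_def by auto
  obtain B where B: "orthonormal B" "span B = UNIV" "\<forall>b\<in>B. K *v b = (b \<bullet> (K *v b)) *\<^sub>R b"
    using symmetric_matrix_orthonormal_eigenbasis_of_invariant_subspace[OF symK subspace_UNIV] by blast
  moreover have "b \<bullet> (K *v b) > 0" if "b \<in> B" for b
    using posK[of b] B(1) that unfolding orthonormal_def by fastforce
  ultimately show ?thesis
    using that[of B "\<lambda>b. b \<bullet> (K *v b)"] by blast
qed

lemma psd_sqrt_on_eigenvector:
  fixes M K :: "real^'n^'n"
  assumes M: "psd_mat M" "M ** M = K" and Kb: "K *v b = l *\<^sub>R b" and "l > 0"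
  shows "M *v b = sqrt l *\<^sub>R b"
proof -
  define s where "s = sqrt l"
  have s: "s > 0" "s * s = l"
    using \<open>l > 0\<close> unfolding s_def by auto
  define u where "u = M *v b - s *\<^sub>R b"
  have "M *v u = K *v b - s *\<^sub>R (M *v b)"
    unfolding u_def using M(2)
    by (simp add: matrix_vector_mult_diff_distrib matrix_vector_mult_scaleR matrix_vector_mul_assoc)
  also have "\<dots> = - s *\<^sub>R u"
    unfolding u_def Kb s(2)[symmetric] by (simp add: algebra_simps)
  finally have "u \<bullet> (M *v u) = - s * (u \<bullet> u)"
    by simp
  moreover have "0 \<le> u \<bullet> (M *v u)"
    using M(1) unfolding psd_mat_def by auto
  ultimately have "s * (u \<bullet> u) \<le> 0"
    by linarith
  then have "u \<bullet> u \<le> 0"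
    using s(1) by (simp add: mult_le_0_iff)
  then have "u = 0"
    by (metis inner_ge_zero inner_eq_zero_iff order_antisym)
  then show ?thesis
    unfolding u_def s_def by simp
qed

lemma pd_mat_psd_sqrt_exists:
  fixes K :: "real^'n^'n"
  assumes "pd_mat K"
  shows "\<exists>M. psd_mat M \<and> M ** M = K"
proof -
  obtain B lam where B: "orthonormal B" "span B = UNIV"
    and Kb: "\<And>b. b \<in> B \<Longrightarrow> K *v b = lam b *\<^sub>R b" and lam: "\<And>b. b \<in> B \<Longrightarrow> lam b > 0"
    using pd_mat_orthonormal_eigenbasis[OF assms] by metis
  define f where "f x = (\<Sum>b\<in>B. (sqrt (lam b) * (b \<bullet> x)) *\<^sub>R b)" for x
  have "linear f"
    unfolding f_def by (rule linearI)
      (simp_all add: inner_add_right sum.distrib scaleR_add_left algebra_simps scaleR_sum_right)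
  define M where "M = matrix f"
  have M: "M *v x = (\<Sum>b\<in>B. (sqrt (lam b) * (b \<bullet> x)) *\<^sub>R b)" for x
    unfolding M_def f_def[symmetric]
    by (rule matrix_works) (simp add: linear_matrix_vector_mul_eq \<open>linear f\<close>)
  have inner_M: "x \<bullet> (M *v y) = (\<Sum>b\<in>B. sqrt (lam b) * (b \<bullet> x) * (b \<bullet> y))" for x y
    unfolding M by (simp add: inner_sum_right algebra_simps inner_commute)
  have "transpose M = M"
    by (rule symmetric_matrix_if_inner)
      (simp add: inner_commute[of "M *v _"] inner_M mult.commute mult.left_commute)
  moreover have "0 \<le> x \<bullet> (M *v x)" for x
    unfolding inner_M using lam by (intro sum_nonneg) (simp add: mult.assoc less_imp_le)
  ultimately have psdM: "psd_mat M"
    unfolding psd_mat_def by blast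
  have Mc: "M *v c = sqrt (lam c) *\<^sub>R c" if "c \<in> B" for c
  proof -
    have "b \<bullet> c = (if b = c then 1 else 0)" if "b \<in> B" for b
      using B(1) \<open>c \<in> B\<close> that unfolding orthonormal_def pairwise_def orthogonal_def
      by (auto simp: norm_eq_1)
    then have "M *v c = (\<Sum>b\<in>B. if b = c then sqrt (lam c) *\<^sub>R c else 0)"
      unfolding M by (intro sum.cong) auto
    moreover have "finite B"
      using B(1) pairwise_orthogonal_imp_finite unfolding orthonormal_def by blast
    ultimately show ?thesis
      using \<open>c \<in> B\<close> by (simp add: sum.delta)
  qed
  have "(M ** M) *v x = K *v x" for x
  proof (rule linear_eq_on_span[OF matrix_vector_mul_linear matrix_vector_mul_linear])
    fix c assume "c \<in> B"
    then show "(M ** M) *v c = K *v c"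
      using lam[of c] by (simp add: Mc Kb matrix_vector_mul_assoc[symmetric] matrix_vector_mult_scaleR)
  qed (use B(2) in auto)
  then have "M ** M = K"
    by (simp add: matrix_eq)
  with psdM show ?thesis by blast
qed

lemma pd_mat_psd_sqrt_unique:
  fixes K M M' :: "real^'n^'n"
  assumes "pd_mat K" and "psd_mat M" "M ** M = K" and "psd_mat M'" "M' ** M' = K"
  shows "M = M'"
proof -
  obtain B lam where B: "span B = UNIV"
    and Kb: "\<And>b. b \<in> B \<Longrightarrow> K *v b = lam b *\<^sub>R b" and lam: "\<And>b. b \<in> B \<Longrightarrow> lam b > 0"
    using pd_mat_orthonormal_eigenbasis[OF assms(1)] by metis
  have "M *v x = M' *v x" for x
  proof (rule linear_eq_on_span[OF matrix_vector_mul_linear matrix_vector_mul_linear])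
    fix b assume "b \<in> B"
    then show "M *v b = M' *v b"
      using psd_sqrt_on_eigenvector[OF assms(2,3) Kb lam] psd_sqrt_on_eigenvector[OF assms(4,5) Kb lam]
      by simp
  qed (use B in auto)
  then show ?thesis
    by (simp add: matrix_eq)
qed

theorem pd_mat_ex1_psd_sqrt:
  fixes K :: "real^'n^'n"
  assumes "pd_mat K"
  shows "\<exists>!M. psd_mat M \<and> M ** M = K"
  using pd_mat_psd_sqrt_exists[OF assms] pd_mat_psd_sqrt_unique[OF assms] by blast

lemma
  fixes H :: "real^'n^'n"
  assumes "pd_mat H"
  shows psd_mat_inv_sqrt_mat: "psd_mat (inv_sqrt_mat H)"
    and inv_sqrt_mat_squared: "inv_sqrt_mat H ** inv_sqrt_mat H = matrix_inv H"
  using theI'[OF pd_mat_ex1_psd_sqrt[OF pd_mat_matrix_inv[OF assms]]]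
  unfolding inv_sqrt_mat_def by auto

section \<open>Spectral norm bounds and the Loewner order\<close>

lemma congruence_spec_norm_quadratic_form_bound:
  fixes H P M :: "real^'n^'n"
  assumes symM: "transpose M = M" and MMH: "M ** M = matrix_inv H" and "invertible H"
    and norm_le: "spec_norm (M ** P ** M - mat 1) \<le> s"
  shows "\<bar>z \<bullet> (P *v z) - z \<bullet> (H *v z)\<bar> \<le> s * (z \<bullet> (H *v z))"
proof -
  define y where "y = M *v (H *v z)"
  have "M *v y = (M ** M) *v (H *v z)"
    unfolding y_def by (simp add: matrix_vector_mul_assoc matrix_mul_assoc)
  then have My: "M *v y = z"
    by (simp add: MMH matrix_vector_inv_left[OF \<open>invertible H\<close>])
  have "y \<bullet> ((M ** P ** M) *v y) = z \<bullet> (P *v z)"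
    by (simp add: My inner_symmetric_matrix[OF symM] flip: matrix_vector_mul_assoc)
  moreover have "y \<bullet> y = z \<bullet> (H *v z)"
    using inner_symmetric_matrix[OF symM, of "H *v z" y] My by (simp add: y_def inner_commute)
  moreover have "\<bar>y \<bullet> ((M ** P ** M - mat 1) *v y)\<bar> \<le> s * (y \<bullet> y)"
  proof -
    have "norm ((M ** P ** M - mat 1) *v y) \<le> s * norm y"
      using onorm[OF matrix_vector_mul_bounded_linear, of "M ** P ** M - mat 1" y] norm_le
        mult_right_mono[OF norm_le norm_ge_zero[of y]]
      unfolding spec_norm_def by linarith
    then have "\<bar>y \<bullet> ((M ** P ** M - mat 1) *v y)\<bar> \<le> norm y * (s * norm y)"
      using Cauchy_Schwarz_ineq2 order_trans mult_left_mono norm_ge_zero by metis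
    then show ?thesis
      by (simp add: power2_norm_eq_inner[symmetric] power2_eq_square mult.left_commute)
  qed
  ultimately show ?thesis
    by (simp add: matrix_vector_mult_diff_rdistrib inner_diff_right)
qed

lemma matrix_inv_quadratic_form_le:
  fixes H P :: "real^'n^'n"
  assumes symH: "transpose H = H" and psdH: "\<And>z. 0 \<le> z \<bullet> (H *v z)" and "invertible P"
    and "c > 0" and lower: "\<And>z. c * (z \<bullet> (H *v z)) \<le> z \<bullet> (P *v z)"
  shows "(H *v u) \<bullet> (matrix_inv P *v (H *v u)) \<le> (u \<bullet> (H *v u)) / c"
proof -
  define w where "w = matrix_inv P *v (H *v u)"
  define q where "q = (H *v u) \<bullet> w"
  have "q = w \<bullet> (P *v w)"
    unfolding q_def w_def by (simp add: matrix_vector_inv_right[OF \<open>invertible P\<close>] inner_commute)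
  then have "c * (w \<bullet> (H *v w)) \<le> q"
    using lower by simp
  have "u \<bullet> (H *v w) = q"
    unfolding q_def by (simp add: inner_symmetric_matrix[OF symH])
  have "0 \<le> (c *\<^sub>R w - u) \<bullet> (H *v (c *\<^sub>R w - u))"
    by (rule psdH)
  also have "\<dots> = c * (c * (w \<bullet> (H *v w))) - 2 * c * q + u \<bullet> (H *v u)"
    using \<open>u \<bullet> (H *v w) = q\<close> inner_symmetric_matrix[OF symH, of w u]
    by (simp add: inner_diff_left inner_diff_right matrix_vector_mult_diff_distrib
        matrix_vector_mult_scaleR inner_commute algebra_simps)
  also have "\<dots> \<le> c * q - 2 * c * q + u \<bullet> (H *v u)"
    using mult_left_mono[OF \<open>c * (w \<bullet> (H *v w)) \<le> q\<close>, of c] \<open>c > 0\<close> by simp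
  finally have "c * q \<le> u \<bullet> (H *v u)"
    by simp
  then show ?thesis
    using \<open>c > 0\<close> unfolding q_def w_def by (simp add: pos_le_divide_eq mult.commute)
qed

lemma matrix_inv_quadratic_form_ge:
  fixes H P :: "real^'n^'n"
  assumes symP: "transpose P = P" and psdP: "\<And>z. 0 \<le> z \<bullet> (P *v z)" and "invertible P"
    and "C > 0" and upper: "\<And>z. z \<bullet> (P *v z) \<le> C * (z \<bullet> (H *v z))"
  shows "(u \<bullet> (H *v u)) / C \<le> (H *v u) \<bullet> (matrix_inv P *v (H *v u))"
proof -
  define w where "w = matrix_inv P *v (H *v u)"
  define h where "h = u \<bullet> (H *v u)"
  define v where "v = (1 / C) *\<^sub>R u"
  have Pw: "P *v w = H *v u"
    unfolding w_def by (rule matrix_vector_inv_right[OF \<open>invertible P\<close>])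
  have vPw: "v \<bullet> (P *v w) = h / C"
    unfolding Pw v_def h_def by simp
  have "v \<bullet> (P *v v) = (1 / C)\<^sup>2 * (u \<bullet> (P *v u))"
    unfolding v_def by (simp add: matrix_vector_mult_scaleR power2_eq_square)
  also have "\<dots> \<le> (1 / C)\<^sup>2 * (C * h)"
    unfolding h_def using upper[of u] by (intro mult_left_mono) auto
  also have "\<dots> = h / C"
    using \<open>C > 0\<close> by (simp add: power2_eq_square field_simps)
  finally have vPv: "v \<bullet> (P *v v) \<le> h / C" .
  have "0 \<le> (w - v) \<bullet> (P *v (w - v))"
    by (rule psdP)
  also have "\<dots> = w \<bullet> (P *v w) - 2 * (h / C) + v \<bullet> (P *v v)"
    using vPw inner_symmetric_matrix[OF symP, of w v]
    by (simp add: inner_diff_left inner_diff_right matrix_vector_mult_diff_distrib inner_commute)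
  finally have "h / C \<le> w \<bullet> (P *v w)"
    using vPv by linarith
  then show ?thesis
    unfolding h_def Pw by (simp add: inner_commute w_def)
qed

section \<open>The regularised and the sketched Hessian\<close>

lemma psd_mat_sgram: "psd_mat (sgram m S)"
proof -
  have "z \<bullet> (sgram m S *v z) = (\<Sum>i\<in>UNIV. \<Sum>j\<in>UNIV. \<Sum>k<m. (z $ i * S k $ i) * (S k $ j * z $ j))" for z
    by (simp add: inner_vec_def matrix_vector_mult_def sgram_def sum_distrib_left sum_distrib_right
        algebra_simps)
  also have "\<dots> z = (\<Sum>k<m. (\<Sum>i\<in>UNIV. z $ i * S k $ i) * (\<Sum>j\<in>UNIV. S k $ j * z $ j))" for z
    by (simp add: sum.swap[of _ "{..<m}"] sum_product)
  finally have "z \<bullet> (sgram m S *v z) = (\<Sum>k<m. (\<Sum>i\<in>UNIV. z $ i * S k $ i)\<^sup>2)" for z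
    by (simp add: power2_eq_square mult.commute)
  then show ?thesis
    unfolding psd_mat_def
    by (auto simp: transpose_def sgram_def vec_eq_iff mult.commute intro: sum_nonneg)
qed

lemma inner_congruence:
  fixes A :: "real^'d^'n" and G :: "real^'n^'n"
  shows "x \<bullet> ((transpose A ** G ** A) *v y) = (A *v x) \<bullet> (G *v (A *v y))"
proof -
  have "x \<bullet> ((transpose A ** G ** A) *v y) = x \<bullet> (transpose A *v (G *v (A *v y)))"
    by (simp only: matrix_vector_mul_assoc matrix_mul_assoc)
  also have "\<dots> = (A *v x) \<bullet> (G *v (A *v y))"
    by (metis dot_lmul_matrix inner_commute transpose_matrix_vector)
  finally show ?thesis .
qed

lemma pd_mat_congruence_add:
  fixes A :: "real^'d^'n" and G :: "real^'n^'n" and L :: "real^'d^'d"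
  assumes "psd_mat G" and "pd_mat L" and "c > 0"
  shows "pd_mat (transpose A ** G ** A + c *\<^sub>R L)"
proof -
  define N where "N = transpose A ** G ** A + c *\<^sub>R L"
  have symG: "transpose G = G" and psdG: "\<And>z. 0 \<le> z \<bullet> (G *v z)"
    using assms(1) unfolding psd_mat_def by auto
  have symL: "transpose L = L" and posL: "\<And>x. x \<noteq> 0 \<Longrightarrow> 0 < x \<bullet> (L *v x)"
    using assms(2) unfolding pd_mat_def by auto
  have inner_N: "x \<bullet> (N *v y) = (A *v x) \<bullet> (G *v (A *v y)) + c * (x \<bullet> (L *v y))" for x y
    unfolding N_def
    by (simp add: matrix_vector_mult_add_rdistrib inner_add_right inner_congruence
        flip: scaleR_matrix_vector_assoc)
  have "x \<bullet> (N *v y) = (N *v x) \<bullet> y" for x y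
  proof -
    have "(A *v x) \<bullet> (G *v (A *v y)) = (A *v y) \<bullet> (G *v (A *v x))"
      using inner_symmetric_matrix[OF symG, of "A *v x" "A *v y"] by (simp add: inner_commute)
    moreover have "x \<bullet> (L *v y) = y \<bullet> (L *v x)"
      using inner_symmetric_matrix[OF symL, of x y] by (simp add: inner_commute)
    ultimately have "x \<bullet> (N *v y) = y \<bullet> (N *v x)"
      unfolding inner_N by simp
    then show ?thesis
      by (simp add: inner_commute)
  qed
  then have "transpose N = N"
    by (rule symmetric_matrix_if_inner)
  moreover have "0 < x \<bullet> (N *v x)" if "x \<noteq> 0" for x
    unfolding inner_N using psdG[of "A *v x"] posL[OF that] \<open>c > 0\<close>
    by (simp add: add_nonneg_pos)
  ultimately show ?thesis
    unfolding pd_mat_def N_def by blast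
qed

lemma
  fixes A :: "real^'d^'n"
  assumes "psd_mat (Lam - mat 1)" and "nu \<noteq> 0"
  shows pd_mat_Hmat: "pd_mat (Hmat A Lam nu)"
    and pd_mat_HSmat: "pd_mat (HSmat A Lam nu m S)"
proof -
  have psd1: "psd_mat (mat 1 :: real^'n^'n)"
    unfolding psd_mat_def by (simp add: transpose_mat)
  have nu2: "nu\<^sup>2 > 0" and pdL: "pd_mat Lam"
    using assms psd_mat_diff_mat_1_imp_pd_mat by auto
  show "pd_mat (Hmat A Lam nu)"
    using pd_mat_congruence_add[OF psd1 pdL nu2, of A] unfolding Hmat_def by (simp add: matrix_mul_rid)
  show "pd_mat (HSmat A Lam nu m S)"
    unfolding HSmat_def by (rule pd_mat_congruence_add[OF psd_mat_sgram pdL nu2])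
qed

lemma gradf_eq_Hmat_diff_xstar:
  assumes "pd_mat (Hmat A Lam nu)"
  shows "gradf A Lam nu b x = Hmat A Lam nu *v (x - xstar A Lam nu b)"
  unfolding gradf_def xstar_def
  by (simp add: matrix_vector_mult_diff_distrib matrix_vector_inv_right[OF pd_mat_invertible[OF assms]])

lemma
  fixes A :: "real^'d^'n"
  assumes pdH: "pd_mat (Hmat A Lam nu)" and pdHS: "pd_mat (HSmat A Lam nu m S)"
    and "0 \<le> s" "s < 1"
    and deviation: "\<And>z. \<bar>z \<bullet> (HSmat A Lam nu m S *v z) - z \<bullet> (Hmat A Lam nu *v z)\<bar>
      \<le> s * (z \<bullet> (Hmat A Lam nu *v z))"
  shows delta_tilde_le_delta: "(1 - s) * delta_tilde A Lam nu b m S x \<le> delta A Lam nu b x"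
    and delta_le_delta_tilde: "delta A Lam nu b x \<le> (1 + s) * delta_tilde A Lam nu b m S x"
proof -
  define H where "H = Hmat A Lam nu"
  define P where "P = HSmat A Lam nu m S"
  define u where "u = x - xstar A Lam nu b"
  have delta: "delta A Lam nu b x = (u \<bullet> (H *v u)) / 2"
    unfolding delta_def H_def u_def by simp
  have delta_tilde: "delta_tilde A Lam nu b m S x = ((H *v u) \<bullet> (matrix_inv P *v (H *v u))) / 2"
    unfolding delta_tilde_def gradf_eq_Hmat_diff_xstar[OF pdH] H_def P_def u_def by simp
  have symH: "transpose H = H" and symP: "transpose P = P"
    using pdH pdHS unfolding pd_mat_def H_def P_def by auto
  have psdH: "0 \<le> z \<bullet> (H *v z)" for z
    using pdH unfolding pd_mat_def H_def by (cases "z = 0") auto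
  have psdP: "0 \<le> z \<bullet> (P *v z)" for z
    using pdHS unfolding pd_mat_def P_def by (cases "z = 0") auto
  have "invertible P"
    unfolding P_def by (rule pd_mat_invertible[OF pdHS])
  have "(1 - s) * (z \<bullet> (H *v z)) \<le> z \<bullet> (P *v z)" and "z \<bullet> (P *v z) \<le> (1 + s) * (z \<bullet> (H *v z))" for z
    using deviation[of z] unfolding H_def P_def by (simp_all add: abs_le_iff algebra_simps)
  note lower = matrix_inv_quadratic_form_le[OF symH psdH \<open>invertible P\<close> _ this(1)]
    and upper = matrix_inv_quadratic_form_ge[OF symP psdP \<open>invertible P\<close> _ this(2)]
  show "(1 - s) * delta_tilde A Lam nu b m S x \<le> delta A Lam nu b x"
    using lower[of u] \<open>s < 1\<close> unfolding delta delta_tilde by (simp add: pos_le_divide_eq mult.commute)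
  show "delta A Lam nu b x \<le> (1 + s) * delta_tilde A Lam nu b m S x"
    using upper[of u] \<open>0 \<le> s\<close> unfolding delta delta_tilde by (simp add: pos_divide_le_eq mult.commute)
qed

lemma delta_tilde_linear_rate:
  fixes A :: "real^'d^'n"
  assumes pdH: "pd_mat (Hmat A Lam nu)" and pdHS: "pd_mat (HSmat A Lam nu m S)"
    and s: "0 \<le> s" "s < 1"
    and deviation: "\<And>z. \<bar>z \<bullet> (HSmat A Lam nu m S *v z) - z \<bullet> (Hmat A Lam nu *v z)\<bar>
      \<le> s * (z \<bullet> (Hmat A Lam nu *v z))"
    and rate: "delta A Lam nu b x \<le> k * delta A Lam nu b x0" and "0 \<le> k"
  shows "delta_tilde A Lam nu b m S x \<le> (1 + s) / (1 - s) * k * delta_tilde A Lam nu b m S x0"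
proof -
  note tilde_le = delta_tilde_le_delta[OF pdH pdHS s deviation]
    and le_tilde = delta_le_delta_tilde[OF pdH pdHS s deviation]
  have "delta_tilde A Lam nu b m S x \<le> delta A Lam nu b x / (1 - s)"
    using tilde_le s by (simp add: pos_le_divide_eq mult.commute)
  also have "\<dots> \<le> k * delta A Lam nu b x0 / (1 - s)"
    using rate s by (intro divide_right_mono) auto
  also have "\<dots> \<le> k * ((1 + s) * delta_tilde A Lam nu b m S x0) / (1 - s)"
    using s \<open>0 \<le> k\<close> le_tilde by (intro divide_right_mono mult_left_mono) auto
  finally show ?thesis
    by (simp add: field_simps)
qed

lemma HSmat_quadratic_form_deviation:
  fixes A :: "real^'d^'n"
  assumes "pd_mat (Hmat A Lam nu)" and "spec_norm (CSmat A Lam nu m S - mat 1) \<le> s"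
  shows "\<bar>z \<bullet> (HSmat A Lam nu m S *v z) - z \<bullet> (Hmat A Lam nu *v z)\<bar> \<le> s * (z \<bullet> (Hmat A Lam nu *v z))"
  using congruence_spec_norm_quadratic_form_bound[OF _ inv_sqrt_mat_squared[OF assms(1)]
      pd_mat_invertible[OF assms(1)]] psd_mat_inv_sqrt_mat[OF assms(1)] assms(2)
  unfolding CSmat_def psd_mat_def by blast

lemma max_sqrt_self:
  assumes "0 \<le> x" "x \<le> 1"
  shows "max (sqrt x) x = sqrt x"
  using assms real_sqrt_le_iff[of "x * x" x] by (simp add: max_def mult_left_le_one_le)

theorem corollary2p5:
  fixes A :: "real^'d^'n" and b :: "real^'d" and Lam :: "real^'d^'d" and nu :: real
    and rho :: real and phi :: "real \<Rightarrow> real" and alpha :: real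
    and psi :: "nat \<Rightarrow> (real^'d) list \<Rightarrow> real^'d^'d \<Rightarrow> real^'d"
    and x0 :: "real^'d" and m :: nat and S :: "nat \<Rightarrow> real^'n"
  assumes "CARD('d) \<le> CARD('n)"
    and "diag_mat Lam" and "psd_mat (Lam - mat 1)" and "nu > 0"
    and "0 < rho" and "rho < 1"
    and "\<forall>r. 0 < r \<and> r < 1 \<longrightarrow> phi r > 0"
    and "alpha \<ge> 0"
    and "precond_first_order A Lam nu b psi"
    and "linear_conv A Lam nu b psi rho (phi rho) alpha"
    and "m \<ge> 1"
    and "spec_norm (CSmat A Lam nu m S - mat 1) \<le> sqrt rho"
  shows "\<forall>t. delta_tilde A Lam nu b m S (iter psi (HSmat A Lam nu m S) x0 t)
           \<le> ((1 + sqrt rho) / (1 - sqrt rho) * alpha) * phi rho ^ t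
              * delta_tilde A Lam nu b m S x0"
proof
  fix t
  have "nu \<noteq> 0"
    using \<open>nu > 0\<close> by simp
  note pdH = pd_mat_Hmat[OF \<open>psd_mat (Lam - mat 1)\<close> this, of A]
    and pdHS = pd_mat_HSmat[OF \<open>psd_mat (Lam - mat 1)\<close> this, of A m S]
  have s: "0 \<le> sqrt rho" "sqrt rho < 1"
    using \<open>0 < rho\<close> \<open>rho < 1\<close> by auto
  have "delta A Lam nu b (iter psi (HSmat A Lam nu m S) x0 t) \<le> alpha * phi rho ^ t * delta A Lam nu b x0"
    using \<open>linear_conv A Lam nu b psi rho (phi rho) alpha\<close> \<open>m \<ge> 1\<close> assms(12)
      max_sqrt_self[of rho] \<open>0 < rho\<close> \<open>rho < 1\<close>
    unfolding linear_conv_def by auto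
  moreover have "0 \<le> alpha * phi rho ^ t"
    using assms(5-8) by (simp add: less_imp_le)
  ultimately have "delta_tilde A Lam nu b m S (iter psi (HSmat A Lam nu m S) x0 t)
      \<le> (1 + sqrt rho) / (1 - sqrt rho) * (alpha * phi rho ^ t) * delta_tilde A Lam nu b m S x0"
    by (rule delta_tilde_linear_rate[OF pdH pdHS s HSmat_quadratic_form_deviation[OF pdH assms(12)]])
  then show "delta_tilde A Lam nu b m S (iter psi (HSmat A Lam nu m S) x0 t)
      \<le> ((1 + sqrt rho) / (1 - sqrt rho) * alpha) * phi rho ^ t * delta_tilde A Lam nu b m S x0"
    by (simp only: mult.assoc)
qed

end
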